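(* Let $\mathcal X\subseteq\mathbb R^p$ and $\mathcal A=\{a^{(1)},\dots,a^{(d)}\}$ a finite set of real actions. Let $(\boldsymbol X_i,A_i,R_i)$, $i=1,\dots,n$, be random tuples such that: (i) the tuples are independent; (ii) $\boldsymbol X_1,\dots,\boldsymbol X_n$ are i.i.d.; (iii) conditionally on $\boldsymbol X_i$, $A_i$ has distribution $\widetilde\pi_i(\cdot\mid\boldsymbol X_i)$ with $\widetilde\pi_i(a\mid\boldsymbol x)>0$ for all $a,\boldsymbol x$; (iv) the conditional distribution of $R_i$ given $\boldsymbol X_i=\boldsymbol x,A_i=a$ does not depend on $i$; rewards have finite second moments. Let $f_1,\dots,f_q:\mathbb R\to\mathbb R$, $\boldsymbol f(a)=(1,f_1(a),\dots,f_q(a))^\top$, and let $D\in\mathbb R^{d\times(q+1)}$ have $k$-th row $\boldsymbol f(a^{(k)})^\top$, assumed of full column rank. For $1\le i\le n$ let $W_i(\boldsymbol X_i)\in\mathbb R^{d\times d}$ be any symmetric positive-definite matrix (a function of $\boldsymbol X_i$) and $\mathbf K_i(\boldsymbol X_i)=W_i(\boldsymbol X_i)D\,(D^\top W_i(\boldsymbol X_i)D)^{-1}D^\top$. Let $\Sigma_i(\boldsymbol X_i)\in\mathbb R^{d\times d}$ be the conditional covariance matrix, given $\boldsymbol X_i$, of the vector of per-action IPS weights, with entries $$\Sigma_{i,jk}(\boldsymbol X_i)=\operatorname{Cov}\Big(R_i\frac{\mathbf 1_{\{A_i=a^{(j)}\}}}{\widetilde\pi_i(a^{(j)}\mid\boldsymbol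 X_i)},\,R_i\frac{\mathbf 1_{\{A_i=a^{(k)}\}}}{\widetilde\pi_i(a^{(k)}\mid\boldsymbol X_i)}\;\Big|\;\boldsymbol X_i\Big).$$ For a deterministic policy $\pi:\mathcal X\to\mathcal A$ define $$\widehat V_{\rm IPS}(\pi)=\frac1n\sum_{i=1}^nR_i\frac{\mathbf 1_{\{A_i=\pi(\boldsymbol X_i)\}}}{\widetilde\pi_i(A_i\mid\boldsymbol X_i)},\qquad \widehat V_{\rm K}(\pi)=\frac1n\sum_{i=1}^nR_i\frac{\langle\boldsymbol e_{A_i},\mathbf K_i(\boldsymbol X_i)\boldsymbol e_{\pi(\boldsymbol X_i)}\rangle}{\widetilde\pi_i(A_i\mid\boldsymbol X_i)}.$$ Then for every deterministic policy $\pi:\mathcal X\to\mathcal A$, $$\operatorname{Var}\big(\widehat V_{\rm K}(\pi)\mid\boldsymbol X_1,\dots,\boldsymbol X_n\big)\le\max_{1\le i\le n}\kappa\big(W_i(\boldsymbol X_i)\Sigma_i(\boldsymbol X_i)\big)\,\operatorname{Var}\big(\widehat V_{\rm IPS}(\pi)\mid\boldsymbol X_1,\dots,\boldsymbol X_n\big),$$ where for a square matrix $M$, $\kappa(M)\ge1$ denotes the spectral condition number, i.e. the ratio between the largest and the smallest eigenvalue of $M$.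
   Context: $\boldsymbol e_a\in\{0,1\}^d$ is the one-hot encoding of $a\in\mathcal A$ (entry $k$ equals $\mathbf 1_{\{a=a^{(k)}\}}$). Variances and covariances are taken under the data-generating law described (actions drawn from the logging policies $\widetilde\pi_i$). The eigenvalues of $W\Sigma$ with $W$ positive definite and $\Sigma$ positive semidefinite are real and nonnegative; if the smallest is zero, $\kappa$ is $+\infty$. *)

theory Defs
  imports "HOL-Probability.Probability"
begin

text \<open>One-hot encoding e_a of an action (actions are identified with the indices of the finite type 'd).\<close>
definition one_hot :: "'d::finite \<Rightarrow> real^'d" where
  "one_hot a = (\<chi> k. if k = a then 1 else 0)"

definition expect :: "'a measure \<Rightarrow> ('a \<Rightarrow> real) \<Rightarrow> real" where
  "expect M X = (\<integral>\<omega>. X \<omega> \<partial>M)"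

definition covar :: "'a measure \<Rightarrow> ('a \<Rightarrow> real) \<Rightarrow> ('a \<Rightarrow> real) \<Rightarrow> real" where
  "covar M X Y = expect M (\<lambda>\<omega>. (X \<omega> - expect M X) * (Y \<omega> - expect M Y))"

definition var :: "'a measure \<Rightarrow> ('a \<Rightarrow> real) \<Rightarrow> real" where
  "var M X = expect M (\<lambda>\<omega>. (X \<omega> - expect M X)\<^sup>2)"

text \<open>Conditional law of (A_i, R_i) given X_i = x: A_i ~ p = pi_tilde_i(.|x), and
  R_i | (X_i = x, A_i = a) ~ K a.\<close>
definition cond_law :: "'d pmf \<Rightarrow> ('d \<Rightarrow> real measure) \<Rightarrow> ('d \<times> real) measure" where
  "cond_law p K = measure_pmf p \<bind>
      (\<lambda>a. distr (K a) (count_space UNIV \<Otimes>\<^sub>M borel) (\<lambda>r. (a, r)))"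

definition ips_cov :: "'d::finite pmf \<Rightarrow> ('d \<Rightarrow> real measure) \<Rightarrow> real^'d^'d" where
  "ips_cov p K = (\<chi> j k. covar (cond_law p K)
      (\<lambda>(a, r). r * (if a = j then 1 else 0) / pmf p j)
      (\<lambda>(a, r). r * (if a = k then 1 else 0) / pmf p k))"

definition real_eigenvalues :: "real^'n^'n \<Rightarrow> real set" where
  "real_eigenvalues M = {c. \<exists>v. v \<noteq> 0 \<and> M *v v = c *\<^sub>R v}"

text \<open>Spectral condition number: largest over smallest eigenvalue; +infinity if the
  smallest eigenvalue is 0 (used only for matrices W Sigma with real nonnegative spectrum).\<close>
definition cond_number :: "real^'n^'n \<Rightarrow> ereal" where
  "cond_number M = (if Min (real_eigenvalues M) = 0 then \<infinity>
      else ereal (Max (real_eigenvalues M) / Min (real_eigenvalues M)))"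

definition K_mat :: "real^'d^'d \<Rightarrow> real^'c^'d \<Rightarrow> real^'d^'d" where
  "K_mat W D = W ** D ** matrix_inv (transpose D ** W ** D) ** transpose D"

end

theory Submission
  imports Defs
begin

text \<open>
  Given the contexts, both estimators are sums of independent terms, and the i-th term is the
  linear statistic c' Y of the vector Y of per-action IPS weights, with c = K e for V_K and
  c = e for V_IPS, where e is the one-hot vector of the target action; its variance is the
  quadratic form c' \<Sigma> c. Write K e = W z: then z = D (D' W D)^-1 D' e is the W-orthogonal
  projection of w = W^-1 e onto the column space of D, so z' W z \<le> w' W w. The generalized
  Rayleigh quotient (W v)' \<Sigma> (W v) / v' W v lies between the smallest and the largest eigenvalue
  m \<le> M of W \<Sigma>, hence (K e)' \<Sigma> (K e) \<le> M z' W z \<le> M w' W w \<le> (M / m) e' \<Sigma> e.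
  Summing over i gives the bound with the largest condition number.
\<close>

section \<open>Quadratic forms and the eigenvalues of W S\<close>

definition pos_def_matrix :: "real^'n^'n \<Rightarrow> bool" where
  "pos_def_matrix W \<longleftrightarrow> transpose W = W \<and> (\<forall>v. v \<noteq> 0 \<longrightarrow> 0 < v \<bullet> (W *v v))"

definition pos_semidef_matrix :: "real^'n^'n \<Rightarrow> bool" where
  "pos_semidef_matrix S \<longleftrightarrow> transpose S = S \<and> (\<forall>v. 0 \<le> v \<bullet> (S *v v))"

lemma symmetric_matrix_form_commute:
  fixes A :: "real^'n^'n"
  assumes "transpose A = A"
  shows "x \<bullet> (A *v y) = y \<bullet> (A *v x)"
  by (metis assms dot_lmul_matrix inner_commute transpose_matrix_vector)

lemma inner_matrix_vector_transpose:
  fixes A :: "real^'n^'m"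
  shows "(A *v x) \<bullet> y = x \<bullet> (transpose A *v y)"
  by (metis dot_lmul_matrix inner_commute transpose_matrix_vector)

lemma symmetric_matrix_congruence_form:
  fixes W S :: "real^'n^'n"
  assumes "transpose W = W"
  shows "(W *v w) \<bullet> (S *v (W *v w)) = w \<bullet> ((W ** S ** W) *v w)"
  by (metis assms symmetric_matrix_form_commute inner_commute matrix_vector_mul_assoc)

lemma matrix_form_scaleR:
  fixes M :: "real^'n^'n"
  shows "(c *\<^sub>R w) \<bullet> (M *v (c *\<^sub>R w)) = c\<^sup>2 * (w \<bullet> (M *v w))"
  by (simp add: matrix_vector_mult_scaleR power2_eq_square)

lemma continuous_on_matrix_form:
  fixes M :: "real^'n^'n"
  shows "continuous_on T (\<lambda>w. w \<bullet> (M *v w))"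
proof -
  have "continuous_on T ((*v) M)"
    by (rule matrix_vector_mult_linear_continuous_on)
  then show ?thesis
    by (intro continuous_intros)
qed

lemma invertible_matrix_inv_right:
  fixes A :: "real^'n^'n"
  assumes "invertible A"
  shows "A ** matrix_inv A = mat 1"
proof -
  have "\<exists>A'. A ** A' = mat 1 \<and> A' ** A = mat 1"
    using assms invertible_def by blast
  from someI_ex[OF this] show ?thesis
    unfolding matrix_inv_def by blast
qed

lemma pos_def_matrix_invertible:
  assumes "pos_def_matrix W"
  shows "invertible W"
proof -
  have "\<forall>x. W *v x = 0 \<longrightarrow> x = 0"
    using assms unfolding pos_def_matrix_def by force
  then show ?thesis
    using matrix_left_invertible_ker invertible_left_inverse by blast
qed

lemma pos_def_matrix_congruence:
  fixes W :: "real^'n^'n" and D :: "real^'m^'n"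
  assumes "pos_def_matrix W" and "inj ((*v) D)"
  shows "pos_def_matrix (transpose D ** W ** D)"
  unfolding pos_def_matrix_def
proof (intro conjI allI impI)
  show "transpose (transpose D ** W ** D) = transpose D ** W ** D"
    using assms(1) by (simp add: pos_def_matrix_def matrix_transpose_mul matrix_mul_assoc)
next
  fix x :: "real^'m"
  assume "x \<noteq> 0"
  then have "D *v x \<noteq> 0"
    using assms(2) by (metis injD matrix_vector_mult_0_right)
  then have "0 < (D *v x) \<bullet> (W *v (D *v x))"
    using assms(1) unfolding pos_def_matrix_def by blast
  also have "\<dots> = x \<bullet> ((transpose D ** W ** D) *v x)"
    by (simp add: inner_matrix_vector_transpose matrix_vector_mul_assoc matrix_mul_assoc)
  finally show "0 < x \<bullet> ((transpose D ** W ** D) *v x)" .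
qed

lemma pos_semidef_matrix_form_eq_0_imp_kernel:
  fixes N :: "real^'n^'n"
  assumes N: "pos_semidef_matrix N" and x: "x \<bullet> (N *v x) = 0"
  shows "N *v x = 0"
proof -
  define y where "y = N *v x"
  define a where "a = y \<bullet> y"
  define b where "b = y \<bullet> (N *v y)"
  have b: "0 \<le> b"
    using N unfolding b_def pos_semidef_matrix_def by blast
  have "x \<bullet> (N *v y) = a"
    using N symmetric_matrix_form_commute[of N x y] unfolding a_def y_def pos_semidef_matrix_def
    by (simp add: inner_commute)
  then have expand: "(x - t *\<^sub>R y) \<bullet> (N *v (x - t *\<^sub>R y)) = t\<^sup>2 * b - 2 * t * a" for t
    using x unfolding a_def b_def y_def
    by (simp add: matrix_vector_mult_diff_distrib matrix_vector_mult_scaleR inner_diff_left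
        inner_diff_right inner_commute power2_eq_square algebra_simps)
  \<comment> \<open>t^2 b - 2 t a \<ge> 0 for all t forces a = 0; the choice t = a / (b + 1) exhibits this.\<close>
  define t where "t = a / (b + 1)"
  have "a = t * (b + 1)"
    using b unfolding t_def by simp
  then have "(b + 1)\<^sup>2 * (t\<^sup>2 * b - 2 * t * a) = - (a\<^sup>2 * (b + 2))"
    by (simp add: power2_eq_square algebra_simps)
  moreover have "0 \<le> t\<^sup>2 * b - 2 * t * a"
    using N expand[of t] unfolding pos_semidef_matrix_def by metis
  ultimately have "a\<^sup>2 * (b + 2) \<le> 0"
    by (metis neg_0_le_iff_le zero_le_mult_iff zero_le_power2)
  then have "a = 0"
    using b by (simp add: mult_le_0_iff)
  then show ?thesis
    unfolding a_def y_def by simp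
qed

lemma eigenvector_combination_eq_0:
  fixes M :: "real^'n^'n"
  assumes "finite S" and eig: "\<And>c. c \<in> S \<Longrightarrow> v c \<noteq> 0 \<and> M *v v c = c *\<^sub>R v c"
    and "(\<Sum>c\<in>S. a c *\<^sub>R v c) = 0" and "c \<in> S"
  shows "a c = 0"
  using assms
proof (induction S arbitrary: a c rule: finite_induct)
  case empty
  then show ?case by simp
next
  case (insert l S)
  have sum: "a l *\<^sub>R v l + (\<Sum>c\<in>S. a c *\<^sub>R v c) = 0"
    using insert by simp
  then have "M *v (a l *\<^sub>R v l + (\<Sum>c\<in>S. a c *\<^sub>R v c)) = 0"
    by simp
  then have Msum: "(a l * l) *\<^sub>R v l + (\<Sum>c\<in>S. (a c * c) *\<^sub>R v c) = 0"
    using insert.prems(1) by (simp add: matrix_vector_right_distrib matrix_vector_mult_scaleR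
        vec.sum)
  \<comment> \<open>Eliminating v l leaves a relation among the eigenvectors for S, with coefficients a c (c - l).\<close>
  have "(\<Sum>c\<in>S. (a c * (c - l)) *\<^sub>R v c)
      = (a l * l) *\<^sub>R v l + (\<Sum>c\<in>S. (a c * c) *\<^sub>R v c) - l *\<^sub>R (a l *\<^sub>R v l + (\<Sum>c\<in>S. a c *\<^sub>R v c))"
    by (simp add: algebra_simps scaleR_sum_right sum_subtractf)
  also have "\<dots> = 0"
    using sum Msum by simp
  finally have "a c * (c - l) = 0" if "c \<in> S" for c
    using insert.IH[where a="\<lambda>c. a c * (c - l)"] insert.prems(1) that by simp
  then have S0: "a c = 0" if "c \<in> S" for c
    using insert.hyps(2) that by fastforce
  then have "a l *\<^sub>R v l = 0"
    using sum by simp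
  then have "a l = 0"
    using insert.prems(1) by simp
  then show ?case
    using S0 insert.prems(3) by blast
qed

lemma finite_real_eigenvalues:
  fixes M :: "real^'n^'n"
  shows "finite (real_eigenvalues M)"
proof -
  define v where "v c = (SOME x. x \<noteq> 0 \<and> M *v x = c *\<^sub>R x)" for c
  have eig: "v c \<noteq> 0 \<and> M *v v c = c *\<^sub>R v c" if "c \<in> real_eigenvalues M" for c
    using someI_ex[of "\<lambda>x. x \<noteq> 0 \<and> M *v x = c *\<^sub>R x"] that
    unfolding real_eigenvalues_def v_def by blast
  have "card S \<le> CARD('n)" if S: "S \<subseteq> real_eigenvalues M" "finite S" for S
  proof -
    have inj: "inj_on v S"
    proof (rule inj_onI)
      fix c d
      assume "c \<in> S" "d \<in> S" "v c = v d"
      then have "c *\<^sub>R v c = d *\<^sub>R v c" and "v c \<noteq> 0"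
        using S(1) eig by (metis subsetD)+
      then show "c = d"
        by simp
    qed
    have "independent (v ` S)"
    proof (rule independent_if_scalars_zero)
      fix f x
      assume f: "(\<Sum>x\<in>v ` S. f x *\<^sub>R x) = 0" and x: "x \<in> v ` S"
      have sum: "(\<Sum>c\<in>S. f (v c) *\<^sub>R v c) = 0"
        using f inj by (simp add: sum.reindex)
      obtain c where c: "c \<in> S" "x = v c"
        using x by blast
      have "f (v c) = 0"
        by (rule eigenvector_combination_eq_0[where M=M, OF S(2) _ sum c(1)]) (use S(1) eig in blast)
      then show "f x = 0"
        using c(2) by simp
    qed (use S in simp)
    then have "card (v ` S) \<le> CARD('n)"
      using independent_bound by fastforce
    then show ?thesis
      using inj by (simp add: card_image)
  qed
  then show ?thesis
    using finite_if_finite_subsets_card_bdd by blast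
qed

lemma real_eigenvalues_uminus:
  fixes M :: "real^'n^'n"
  assumes "\<mu> \<in> real_eigenvalues (- M)"
  shows "- \<mu> \<in> real_eigenvalues M"
proof -
  obtain v where v: "v \<noteq> 0" "(- M) *v v = \<mu> *\<^sub>R v"
    using assms unfolding real_eigenvalues_def by blast
  have "M *v v = - ((- M) *v v)"
    by (simp add: vec_eq_iff matrix_vector_mult_def sum_negf)
  also have "\<dots> = (- \<mu>) *\<^sub>R v"
    using v(2) by simp
  finally show ?thesis
    using v(1) unfolding real_eigenvalues_def by blast
qed

lemma real_eigenvalues_nonneg:
  fixes W S :: "real^'n^'n"
  assumes W: "pos_def_matrix W" and S: "pos_semidef_matrix S"
    and c: "c \<in> real_eigenvalues (W ** S)"
  shows "0 \<le> c"
proof -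
  obtain v where v: "v \<noteq> 0" "W *v (S *v v) = c *\<^sub>R v"
    using c unfolding real_eigenvalues_def by (auto simp: matrix_vector_mul_assoc)
  define u where "u = S *v v"
  \<comment> \<open>u = S v satisfies W u = c v, so u' W u = c v' S v.\<close>
  have "u \<bullet> (W *v u) = c * (v \<bullet> (S *v v))"
    using v(2) S symmetric_matrix_form_commute[of S v v] unfolding u_def pos_semidef_matrix_def
    by (simp add: inner_commute)
  moreover have "0 \<le> v \<bullet> (S *v v)"
    using S unfolding pos_semidef_matrix_def by blast
  moreover have "u = 0 \<Longrightarrow> c = 0"
    using v unfolding u_def by simp
  moreover have "u \<noteq> 0 \<Longrightarrow> 0 < u \<bullet> (W *v u)"
    using W unfolding pos_def_matrix_def by blast
  ultimately show ?thesis
    using zero_less_mult_pos2 by (cases "u = 0") force+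
qed

lemma rayleigh_bound_attained_imp_eigenvalue:
  fixes W S :: "real^'n^'n"
  assumes W: "pos_def_matrix W" and S: "transpose S = S"
    and bound: "\<And>w. \<mu> * (w \<bullet> (W *v w)) \<le> (W *v w) \<bullet> (S *v (W *v w))"
    and w0: "w0 \<noteq> 0"
    and attained: "\<mu> * (w0 \<bullet> (W *v w0)) = (W *v w0) \<bullet> (S *v (W *v w0))"
  shows "\<mu> \<in> real_eigenvalues (W ** S)"
proof -
  have W_sym: "transpose W = W"
    using W unfolding pos_def_matrix_def by blast
  define N where "N = W ** S ** W - \<mu> *\<^sub>R W"
  have "x \<bullet> ((\<mu> *\<^sub>R W) *v x) = \<mu> * (x \<bullet> (W *v x))" for x
    by (metis inner_scaleR_right scaleR_matrix_vector_assoc)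
  then have form: "x \<bullet> (N *v x) = (W *v x) \<bullet> (S *v (W *v x)) - \<mu> * (x \<bullet> (W *v x))" for x
    unfolding N_def symmetric_matrix_congruence_form[OF W_sym]
    by (simp add: matrix_vector_mult_diff_rdistrib inner_diff_right)
  have "transpose (W ** S ** W) = W ** S ** W"
    using W_sym S by (simp add: matrix_transpose_mul matrix_mul_assoc)
  then have "transpose N = N"
    using W_sym unfolding N_def by (simp add: transpose_def vec_eq_iff)
  then have "pos_semidef_matrix N"
    unfolding pos_semidef_matrix_def using form bound by simp
  then have "N *v w0 = 0"
    by (rule pos_semidef_matrix_form_eq_0_imp_kernel) (simp add: form attained)
  then have "(W ** S) *v (W *v w0) = \<mu> *\<^sub>R (W *v w0)"
    unfolding N_def
    by (simp add: matrix_vector_mult_diff_rdistrib scaleR_matrix_vector_assoc matrix_vector_mul_assoc)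
  moreover have "W *v w0 \<noteq> 0"
    using W w0 unfolding pos_def_matrix_def by fastforce
  ultimately show ?thesis
    unfolding real_eigenvalues_def by blast
qed

lemma rayleigh_min_eigenvalue:
  fixes W S :: "real^'n^'n"
  assumes W: "pos_def_matrix W" and S: "transpose S = S"
  obtains \<mu> where "\<mu> \<in> real_eigenvalues (W ** S)"
    and "\<And>w. \<mu> * (w \<bullet> (W *v w)) \<le> (W *v w) \<bullet> (S *v (W *v w))"
proof -
  have W_sym: "transpose W = W"
    using W unfolding pos_def_matrix_def by blast
  define A where "A w = w \<bullet> ((W ** S ** W) *v w)" for w
  define B where "B w = w \<bullet> (W *v w)" for w
  define q where "q w = A w / B w" for w
  have B_pos: "0 < B w" if "w \<noteq> 0" for w
    using W that unfolding B_def pos_def_matrix_def by blast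
  have q_scaleR: "q (c *\<^sub>R w) = q w" if "c \<noteq> 0" for c w
    using that unfolding q_def A_def B_def matrix_form_scaleR by simp
  have "B w \<noteq> 0" if "w \<in> sphere 0 1" for w
  proof -
    have "w \<noteq> 0"
      using that by auto
    then show ?thesis
      using B_pos by (metis less_irrefl)
  qed
  then have cont: "continuous_on (sphere 0 1) q"
    unfolding q_def A_def B_def
    by (intro continuous_on_divide continuous_on_matrix_form) (auto simp: B_def)
  have "sphere (0::real^'n) 1 \<noteq> {}"
    by simp
  then obtain w0 where w0: "w0 \<in> sphere 0 1" and min: "\<And>y. y \<in> sphere 0 1 \<Longrightarrow> q w0 \<le> q y"
    using continuous_attains_inf[OF compact_sphere _ cont] by blast
  have "q w0 * B w \<le> A w" for w
  proof (cases "w = 0")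
    case False
    then have "q w0 \<le> q (w /\<^sub>R norm w)"
      by (intro min) simp
    then have "q w0 \<le> q w"
      using False q_scaleR[of "inverse (norm w)" w] by simp
    then show ?thesis
      using B_pos[OF False] unfolding q_def by (simp add: pos_le_divide_eq)
  qed (simp add: A_def B_def)
  moreover have "w0 \<noteq> 0"
    using w0 by auto
  moreover have "q w0 * B w0 = A w0"
    using B_pos[OF \<open>w0 \<noteq> 0\<close>] unfolding q_def by simp
  ultimately show ?thesis
    using that rayleigh_bound_attained_imp_eigenvalue[OF W S]
    unfolding A_def B_def symmetric_matrix_congruence_form[OF W_sym, symmetric] by blast
qed

lemma rayleigh_max_eigenvalue:
  fixes W S :: "real^'n^'n"
  assumes W: "pos_def_matrix W" and S: "transpose S = S"
  obtains \<mu> where "\<mu> \<in> real_eigenvalues (W ** S)"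
    and "\<And>w. (W *v w) \<bullet> (S *v (W *v w)) \<le> \<mu> * (w \<bullet> (W *v w))"
proof -
  have "transpose (- S) = - S"
    using S by (simp add: transpose_def vec_eq_iff)
  then obtain \<mu> where eig: "\<mu> \<in> real_eigenvalues (W ** (- S))"
    and bound: "\<And>w. \<mu> * (w \<bullet> (W *v w)) \<le> (W *v w) \<bullet> ((- S) *v (W *v w))"
    using rayleigh_min_eigenvalue[OF W] by blast
  have "W ** (- S) = - (W ** S)" and neg: "(- S) *v x = - (S *v x)" for x
    by (simp_all add: vec_eq_iff matrix_matrix_mult_def matrix_vector_mult_def sum_negf)
  then have "- \<mu> \<in> real_eigenvalues (W ** S)"
    using eig real_eigenvalues_uminus by metis
  moreover have "(W *v w) \<bullet> (S *v (W *v w)) \<le> - \<mu> * (w \<bullet> (W *v w))" for w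
    using bound[of w] by (simp add: neg)
  ultimately show ?thesis
    using that by blast
qed

lemma matrix_form_eigenvalue_bounds:
  fixes W S :: "real^'n^'n"
  assumes W: "pos_def_matrix W" and S: "transpose S = S"
  shows "real_eigenvalues (W ** S) \<noteq> {}"
    and "Min (real_eigenvalues (W ** S)) * (w \<bullet> (W *v w)) \<le> (W *v w) \<bullet> (S *v (W *v w))"
    and "(W *v w) \<bullet> (S *v (W *v w)) \<le> Max (real_eigenvalues (W ** S)) * (w \<bullet> (W *v w))"
proof -
  have B: "0 \<le> w \<bullet> (W *v w)"
    using W unfolding pos_def_matrix_def by (cases "w = 0") (auto intro: less_imp_le)
  obtain \<mu> where \<mu>: "\<mu> \<in> real_eigenvalues (W ** S)"
    and lower: "\<And>w. \<mu> * (w \<bullet> (W *v w)) \<le> (W *v w) \<bullet> (S *v (W *v w))"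
    using rayleigh_min_eigenvalue[OF W S] by blast
  obtain \<nu> where \<nu>: "\<nu> \<in> real_eigenvalues (W ** S)"
    and upper: "\<And>w. (W *v w) \<bullet> (S *v (W *v w)) \<le> \<nu> * (w \<bullet> (W *v w))"
    using rayleigh_max_eigenvalue[OF W S] by blast
  show "real_eigenvalues (W ** S) \<noteq> {}"
    using \<mu> by blast
  have "Min (real_eigenvalues (W ** S)) \<le> \<mu>"
    by (rule Min_le[OF finite_real_eigenvalues \<mu>])
  then show "Min (real_eigenvalues (W ** S)) * (w \<bullet> (W *v w)) \<le> (W *v w) \<bullet> (S *v (W *v w))"
    using lower[of w] B by (meson mult_right_mono order_trans)
  have "\<nu> \<le> Max (real_eigenvalues (W ** S))"
    by (rule Max_ge[OF finite_real_eigenvalues \<nu>])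
  then show "(W *v w) \<bullet> (S *v (W *v w)) \<le> Max (real_eigenvalues (W ** S)) * (w \<bullet> (W *v w))"
    using upper[of w] B by (meson mult_right_mono order_trans)
qed

lemma K_mat_W_projection:
  fixes W :: "real^'d^'d" and D :: "real^'c^'d"
  assumes W: "pos_def_matrix W" and D: "rank D = CARD('c)" and w: "W *v w = e"
  obtains z where "K_mat W D *v e = W *v z" and "z \<bullet> (W *v z) \<le> w \<bullet> (W *v w)"
proof -
  define G where "G = transpose D ** W ** D"
  have "invertible G"
    using D W unfolding G_def full_rank_injective
    by (intro pos_def_matrix_invertible pos_def_matrix_congruence)
  then have G_inv: "G ** matrix_inv G = mat 1"
    by (rule invertible_matrix_inv_right)
  define y where "y = matrix_inv G *v (transpose D *v e)"
  define z where "z = D *v y"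
  have "K_mat W D *v e = W *v z"
    unfolding K_mat_def z_def y_def G_def by (simp only: matrix_vector_mul_assoc matrix_mul_assoc)
  moreover have "z \<bullet> (W *v z) \<le> w \<bullet> (W *v w)"
  proof -
    \<comment> \<open>Normal equations: z is the W-orthogonal projection of w onto the column space of D.\<close>
    have "transpose D *v (W *v z) = transpose D *v e"
      using G_inv unfolding z_def y_def G_def by (simp add: matrix_vector_mul_assoc matrix_mul_assoc)
    then have zWz: "z \<bullet> (W *v z) = z \<bullet> (W *v w)"
      unfolding z_def w by (simp add: inner_matrix_vector_transpose)
    have W_sym: "transpose W = W"
      using W unfolding pos_def_matrix_def by blast
    have "0 \<le> (w - z) \<bullet> (W *v (w - z))"
      using W unfolding pos_def_matrix_def by (cases "w = z") (auto intro: less_imp_le)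
    also have "\<dots> = w \<bullet> (W *v w) - z \<bullet> (W *v z)"
      using zWz symmetric_matrix_form_commute[OF W_sym, of w z]
      by (simp add: matrix_vector_mult_diff_distrib inner_diff_left inner_diff_right inner_commute)
    finally show ?thesis
      by simp
  qed
  ultimately show ?thesis
    using that by blast
qed

lemma cond_number_le_erealD:
  fixes W S :: "real^'n^'n"
  assumes W: "pos_def_matrix W" and S: "pos_semidef_matrix S"
    and k: "cond_number (W ** S) \<le> ereal k"
  shows "0 < Min (real_eigenvalues (W ** S))"
    and "Max (real_eigenvalues (W ** S)) / Min (real_eigenvalues (W ** S)) \<le> k"
proof -
  define E where "E = real_eigenvalues (W ** S)"
  have "transpose S = S"
    using S unfolding pos_semidef_matrix_def by blast
  then have "Min E \<in> E"
    unfolding E_def by (intro Min_in finite_real_eigenvalues matrix_form_eigenvalue_bounds(1)[OF W])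
  then have "0 \<le> Min E"
    using real_eigenvalues_nonneg[OF W S] unfolding E_def by blast
  moreover have "Min E \<noteq> 0"
    using k unfolding cond_number_def E_def by auto
  ultimately show m: "0 < Min (real_eigenvalues (W ** S))"
    unfolding E_def by simp
  have "ereal (Max E / Min E) \<le> ereal k"
    using k m unfolding cond_number_def E_def by simp
  then show "Max (real_eigenvalues (W ** S)) / Min (real_eigenvalues (W ** S)) \<le> k"
    unfolding E_def by simp
qed

lemma K_mat_form_le_cond_number:
  fixes W S :: "real^'d^'d" and D :: "real^'c^'d"
  assumes W: "pos_def_matrix W" and S: "pos_semidef_matrix S" and D: "rank D = CARD('c)"
    and k: "cond_number (W ** S) \<le> ereal k"
  shows "(K_mat W D *v e) \<bullet> (S *v (K_mat W D *v e)) \<le> k * (e \<bullet> (S *v e))"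
proof -
  define E where "E = real_eigenvalues (W ** S)"
  define A where "A w = (W *v w) \<bullet> (S *v (W *v w))" for w
  define B where "B w = w \<bullet> (W *v w)" for w
  have "transpose S = S"
    using S unfolding pos_semidef_matrix_def by blast
  note bounds = matrix_form_eigenvalue_bounds[OF W this, folded E_def]
  note m = cond_number_le_erealD(1)[OF W S k, folded E_def]
  note Mm = cond_number_le_erealD(2)[OF W S k, folded E_def]
  have E: "finite E"
    unfolding E_def by (rule finite_real_eigenvalues)
  have M: "0 < Max E"
    using m Max_ge[OF E Min_in[OF E bounds(1)]] by linarith
  obtain w where w: "W *v w = e"
    using pos_def_matrix_invertible[OF W] invertible_eq_bij bij_is_surj by (metis surjD)
  obtain z where Kz: "K_mat W D *v e = W *v z" and zw: "B z \<le> B w"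
    using K_mat_W_projection[OF W D w] unfolding B_def .
  have "A z \<le> Max E * B z"
    using bounds(3) unfolding A_def B_def .
  also have "\<dots> \<le> Max E * B w"
    using zw M by simp
  also have "\<dots> = (Max E / Min E) * (Min E * B w)"
    using m by simp
  also have "\<dots> \<le> (Max E / Min E) * A w"
    using bounds(2)[of w] m M unfolding A_def B_def by (intro mult_left_mono) simp_all
  also have "\<dots> \<le> k * A w"
    using Mm S unfolding A_def pos_semidef_matrix_def by (intro mult_right_mono) simp_all
  finally show ?thesis
    using Kz w unfolding A_def by simp
qed

lemma cond_number_neq_minf: "cond_number M \<noteq> - \<infinity>"
  unfolding cond_number_def by simp

lemma sum_K_mat_forms_le_Max_cond_number:
  fixes W S :: "'i \<Rightarrow> real^'d^'d" and D :: "real^'c^'d" and e :: "'i \<Rightarrow> real^'d"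
  assumes I: "finite I" "I \<noteq> {}"
    and W: "\<And>i. i \<in> I \<Longrightarrow> pos_def_matrix (W i)" and S: "\<And>i. i \<in> I \<Longrightarrow> pos_semidef_matrix (S i)"
    and D: "rank D = CARD('c)"
  defines "\<kappa> \<equiv> Max ((\<lambda>i. cond_number (W i ** S i)) ` I)"
  shows "\<kappa> = \<infinity> \<or> (\<Sum>i\<in>I. (K_mat (W i) D *v e i) \<bullet> (S i *v (K_mat (W i) D *v e i)))
      \<le> real_of_ereal \<kappa> * (\<Sum>i\<in>I. e i \<bullet> (S i *v e i))"
proof -
  have "\<kappa> \<in> (\<lambda>i. cond_number (W i ** S i)) ` I"
    unfolding \<kappa>_def using I by (intro Max_in) auto
  then have "\<kappa> \<noteq> - \<infinity>"
    using cond_number_neq_minf by auto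
  then consider "\<kappa> = \<infinity>" | k where "\<kappa> = ereal k"
    by (cases \<kappa>) auto
  then show ?thesis
  proof cases
    case (2 k)
    have "cond_number (W i ** S i) \<le> ereal k" if "i \<in> I" for i
      unfolding 2[symmetric] \<kappa>_def using I(1) that by simp
    then have "(K_mat (W i) D *v e i) \<bullet> (S i *v (K_mat (W i) D *v e i)) \<le> k * (e i \<bullet> (S i *v e i))"
      if "i \<in> I" for i
      using K_mat_form_le_cond_number W S D that by blast
    then show ?thesis
      unfolding 2 sum_distrib_left by (simp add: sum_mono)
  qed simp
qed

section \<open>Variances of sums and of product measures\<close>

lemma covar_commute: "covar M X Y = covar M Y X"
  unfolding covar_def by (simp add: mult.commute)

lemma var_eq_covar: "var M X = covar M X X"
  unfolding var_def covar_def by (simp add: power2_eq_square)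

lemma var_nonneg: "0 \<le> var M X"
  unfolding var_def expect_def by simp

lemma var_cmult: "var M (\<lambda>\<omega>. c * X \<omega>) = c\<^sup>2 * var M X"
  unfolding var_def expect_def
  by (simp add: right_diff_distrib[symmetric] power_mult_distrib)

lemma var_sum_eq_sum_covar:
  fixes X :: "'i \<Rightarrow> 'a \<Rightarrow> real"
  assumes "prob_space M" and "finite J"
    and X: "\<And>j. j \<in> J \<Longrightarrow> integrable M (X j)"
    and XX: "\<And>j k. j \<in> J \<Longrightarrow> k \<in> J \<Longrightarrow> integrable M (\<lambda>\<omega>. X j \<omega> * X k \<omega>)"
  shows "var M (\<lambda>\<omega>. \<Sum>j\<in>J. c j * X j \<omega>) = (\<Sum>j\<in>J. \<Sum>k\<in>J. c j * c k * covar M (X j) (X k))"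
proof -
  interpret prob_space M by fact
  define \<mu> where "\<mu> j = expect M (X j)" for j
  define Y where "Y j \<omega> = X j \<omega> - \<mu> j" for j \<omega>
  have YY: "integrable M (\<lambda>\<omega>. Y j \<omega> * Y k \<omega>)" if "j \<in> J" "k \<in> J" for j k
  proof -
    have "(\<lambda>\<omega>. Y j \<omega> * Y k \<omega>) = (\<lambda>\<omega>. X j \<omega> * X k \<omega> - \<mu> k * X j \<omega> - \<mu> j * X k \<omega> + \<mu> j * \<mu> k)"
      unfolding Y_def by (simp add: fun_eq_iff algebra_simps)
    then show ?thesis
      using X XX that by simp
  qed
  have "expect M (\<lambda>\<omega>. \<Sum>j\<in>J. c j * X j \<omega>) = (\<Sum>j\<in>J. c j * \<mu> j)"
    unfolding expect_def \<mu>_def using X by simp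
  then have "var M (\<lambda>\<omega>. \<Sum>j\<in>J. c j * X j \<omega>) = expect M (\<lambda>\<omega>. (\<Sum>j\<in>J. c j * Y j \<omega>)\<^sup>2)"
    unfolding var_def Y_def by (simp add: right_diff_distrib sum_subtractf)
  also have "\<dots> = expect M (\<lambda>\<omega>. \<Sum>j\<in>J. \<Sum>k\<in>J. c j * c k * (Y j \<omega> * Y k \<omega>))"
    by (simp add: power2_eq_square sum_product mult_ac)
  also have "\<dots> = (\<Sum>j\<in>J. \<Sum>k\<in>J. c j * c k * expect M (\<lambda>\<omega>. Y j \<omega> * Y k \<omega>))"
    unfolding expect_def using YY by (simp add: Bochner_Integration.integral_sum)
  finally show ?thesis
    unfolding covar_def Y_def \<mu>_def .
qed

lemma expect_PiM_component:
  assumes M: "\<And>i. i \<in> I \<Longrightarrow> prob_space (M i)" and i: "i \<in> I"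
    and f: "f \<in> borel_measurable (M i)"
  shows "expect (PiM I M) (\<lambda>\<omega>. f (\<omega> i)) = expect (M i) f"
proof -
  have "(\<lambda>\<omega>. \<omega> i) \<in> PiM I M \<rightarrow>\<^sub>M M i"
    using i by measurable
  then have "(\<integral>\<omega>. f (\<omega> i) \<partial>PiM I M) = integral\<^sup>L (distr (PiM I M) (M i) (\<lambda>\<omega>. \<omega> i)) f"
    using f by (rule integral_distr[symmetric])
  also have "\<dots> = integral\<^sup>L (M i) f"
    by (simp add: distr_PiM_component[of I M i, OF M i])
  finally show ?thesis
    unfolding expect_def .
qed

lemma var_PiM_component:
  assumes M: "\<And>i. i \<in> I \<Longrightarrow> prob_space (M i)" and i: "i \<in> I"
    and f: "f \<in> borel_measurable (M i)"
  shows "var (PiM I M) (\<lambda>\<omega>. f (\<omega> i)) = var (M i) f"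
proof -
  have mean: "expect (PiM I M) (\<lambda>\<omega>. f (\<omega> i)) = expect (M i) f"
    using M i f by (rule expect_PiM_component)
  have "(\<lambda>x. (f x - expect (M i) f)\<^sup>2) \<in> borel_measurable (M i)"
    using f by measurable
  with M i have "expect (PiM I M) (\<lambda>\<omega>. (f (\<omega> i) - expect (M i) f)\<^sup>2)
      = expect (M i) (\<lambda>x. (f x - expect (M i) f)\<^sup>2)"
    by (rule expect_PiM_component)
  then show ?thesis
    unfolding var_def mean .
qed

lemma
  fixes f :: "'i \<Rightarrow> 'a \<Rightarrow> real"
  assumes "finite I" and "J \<subseteq> I" and M: "\<And>i. i \<in> I \<Longrightarrow> prob_space (M i)"
    and f: "\<And>j. j \<in> J \<Longrightarrow> integrable (M j) (f j)"
  shows integrable_PiM_prod: "integrable (PiM I M) (\<lambda>\<omega>. \<Prod>j\<in>J. f j (\<omega> j))"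
    and integral_PiM_prod: "(\<integral>\<omega>. (\<Prod>j\<in>J. f j (\<omega> j)) \<partial>PiM I M) = (\<Prod>j\<in>J. \<integral>x. f j x \<partial>M j)"
proof -
  \<comment> \<open>The library's product integrals need a probability space at every index, not only on I.\<close>
  define M' where "M' i = (if i \<in> I then M i else return (count_space UNIV) undefined)" for i
  have PiM_eq: "PiM I M = PiM I M'"
    unfolding M'_def by (rule PiM_cong) auto
  have "prob_space (M' i)" for i
    unfolding M'_def using M by (simp add: prob_space_return)
  then have M': "product_sigma_finite M'"
    unfolding product_sigma_finite_def by (simp add: prob_space_imp_sigma_finite)
  define F where "F i x = (if i \<in> J then f i x else 1)" for i x
  have F: "integrable (M' i) (F i)"
    and integral_F: "integral\<^sup>L (M' i) (F i) = (if i \<in> J then integral\<^sup>L (M i) (f i) else 1)"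
    if "i \<in> I" for i
  proof -
    interpret prob_space "M i"
      using M that .
    show "integrable (M' i) (F i)"
      using f that \<open>J \<subseteq> I\<close> unfolding F_def M'_def by (cases "i \<in> J") simp_all
    show "integral\<^sup>L (M' i) (F i) = (if i \<in> J then integral\<^sup>L (M i) (f i) else 1)"
      using that unfolding F_def M'_def by (simp add: prob_space)
  qed
  have prod_F: "(\<Prod>i\<in>I. F i (\<omega> i)) = (\<Prod>j\<in>J. f j (\<omega> j))" for \<omega>
    using prod.inter_restrict[OF \<open>finite I\<close>, of "\<lambda>j. f j (\<omega> j)" J] \<open>J \<subseteq> I\<close>
    unfolding F_def by (simp add: Int_absorb1)
  have "integrable (PiM I M') (\<lambda>\<omega>. \<Prod>i\<in>I. F i (\<omega> i))"
    by (rule product_sigma_finite.product_integrable_prod[OF M' \<open>finite I\<close>]) (rule F)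
  then show "integrable (PiM I M) (\<lambda>\<omega>. \<Prod>j\<in>J. f j (\<omega> j))"
    unfolding PiM_eq prod_F .
  have "(\<integral>\<omega>. (\<Prod>j\<in>J. f j (\<omega> j)) \<partial>PiM I M) = (\<integral>\<omega>. (\<Prod>i\<in>I. F i (\<omega> i)) \<partial>PiM I M')"
    unfolding PiM_eq prod_F ..
  also have "\<dots> = (\<Prod>i\<in>I. integral\<^sup>L (M' i) (F i))"
    by (rule product_sigma_finite.product_integral_prod[OF M' \<open>finite I\<close>]) (rule F)
  also have "\<dots> = (\<Prod>j\<in>J. \<integral>x. f j x \<partial>M j)"
    using prod.inter_restrict[OF \<open>finite I\<close>, of "\<lambda>j. \<integral>x. f j x \<partial>M j" J] \<open>J \<subseteq> I\<close>
    by (simp add: integral_F Int_absorb1 cong: prod.cong)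
  finally show "(\<integral>\<omega>. (\<Prod>j\<in>J. f j (\<omega> j)) \<partial>PiM I M) = (\<Prod>j\<in>J. \<integral>x. f j x \<partial>M j)" .
qed

lemma covar_PiM_components_eq_0:
  fixes f g :: "'a \<Rightarrow> real"
  assumes I: "finite I" and M: "\<And>i. i \<in> I \<Longrightarrow> prob_space (M i)"
    and i: "i \<in> I" and j: "j \<in> I" and "i \<noteq> j"
    and f: "integrable (M i) f" and g: "integrable (M j) g"
  shows "covar (PiM I M) (\<lambda>\<omega>. f (\<omega> i)) (\<lambda>\<omega>. g (\<omega> j)) = 0"
proof -
  define H where "H k x = (if k = i then f x - expect (M i) f else g x - expect (M j) g)" for k x
  have Hi: "integrable (M i) (H i)" "integral\<^sup>L (M i) (H i) = 0"
  proof -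
    interpret prob_space "M i"
      using M i .
    show "integrable (M i) (H i)" "integral\<^sup>L (M i) (H i) = 0"
      using f unfolding H_def expect_def by (simp_all add: prob_space)
  qed
  have Hj: "integrable (M j) (H j)"
  proof -
    interpret prob_space "M j"
      using M j .
    show ?thesis
      using g \<open>i \<noteq> j\<close> unfolding H_def by simp
  qed
  have "expect (PiM I M) (\<lambda>\<omega>. f (\<omega> i)) = expect (M i) f"
    using M i borel_measurable_integrable[OF f] by (rule expect_PiM_component)
  moreover have "expect (PiM I M) (\<lambda>\<omega>. g (\<omega> j)) = expect (M j) g"
    using M j borel_measurable_integrable[OF g] by (rule expect_PiM_component)
  ultimately have "covar (PiM I M) (\<lambda>\<omega>. f (\<omega> i)) (\<lambda>\<omega>. g (\<omega> j))
      = expect (PiM I M) (\<lambda>\<omega>. \<Prod>k\<in>{i, j}. H k (\<omega> k))"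
    unfolding covar_def using \<open>i \<noteq> j\<close> by (simp add: H_def)
  also have "\<dots> = (\<Prod>k\<in>{i, j}. integral\<^sup>L (M k) (H k))"
    unfolding expect_def using I i j M Hi Hj by (intro integral_PiM_prod) auto
  also have "\<dots> = 0"
    using Hi(2) by simp
  finally show ?thesis .
qed

lemma var_PiM_sum:
  fixes G :: "'i \<Rightarrow> 'a \<Rightarrow> real"
  assumes I: "finite I" and M: "\<And>i. i \<in> I \<Longrightarrow> prob_space (M i)"
    and G: "\<And>i. i \<in> I \<Longrightarrow> integrable (M i) (G i)"
    and G2: "\<And>i. i \<in> I \<Longrightarrow> integrable (M i) (\<lambda>x. (G i x)\<^sup>2)"
  shows "var (PiM I M) (\<lambda>\<omega>. \<Sum>i\<in>I. G i (\<omega> i)) = (\<Sum>i\<in>I. var (M i) (G i))"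
proof -
  define Y where "Y i \<omega> = G i (\<omega> i)" for i \<omega>
  have Y: "integrable (PiM I M) (Y i)" if "i \<in> I" for i
    using integrable_PiM_prod[of I "{i}" M G] I M G that unfolding Y_def by simp
  have YY: "integrable (PiM I M) (\<lambda>\<omega>. Y i \<omega> * Y j \<omega>)" if "i \<in> I" "j \<in> I" for i j
  proof (cases "i = j")
    case True
    then show ?thesis
      using integrable_PiM_prod[of I "{i}" M "\<lambda>_ x. G i x * G i x"] I M G2[of i] that
      unfolding Y_def by (simp add: power2_eq_square)
  next
    case False
    then show ?thesis
      using integrable_PiM_prod[of I "{i, j}" M G] I M G that unfolding Y_def by auto
  qed
  have covar: "covar (PiM I M) (Y i) (Y j) = (if i = j then var (M i) (G i) else 0)"
    if "i \<in> I" "j \<in> I" for i j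
  proof (cases "i = j")
    case True
    have "var (PiM I M) (Y i) = var (M i) (G i)"
      unfolding Y_def using M that(1) borel_measurable_integrable[OF G[OF that(1)]]
      by (rule var_PiM_component)
    then show ?thesis
      using True by (simp add: var_eq_covar)
  next
    case False
    then show ?thesis
      unfolding Y_def using I M that False G[OF that(1)] G[OF that(2)]
      by (simp add: covar_PiM_components_eq_0)
  qed
  have "var (PiM I M) (\<lambda>\<omega>. \<Sum>i\<in>I. 1 * Y i \<omega>) = (\<Sum>i\<in>I. \<Sum>j\<in>I. 1 * 1 * covar (PiM I M) (Y i) (Y j))"
    using prob_space_PiM[OF M] I Y YY by (rule var_sum_eq_sum_covar)
  also have "\<dots> = (\<Sum>i\<in>I. var (M i) (G i))"
    using I by (simp add: covar)
  finally show ?thesis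
    unfolding Y_def by simp
qed

section \<open>The conditional law of an action-reward pair\<close>

definition ips_weight :: "'d pmf \<Rightarrow> 'd \<Rightarrow> 'd \<times> real \<Rightarrow> real" where
  "ips_weight p j = (\<lambda>(a, r). r * (if a = j then 1 else 0) / pmf p j)"

lemma ips_cov_nth:
  "ips_cov p K $ j $ k = covar (cond_law p K) (ips_weight p j) (ips_weight p k)"
  unfolding ips_cov_def ips_weight_def by simp

lemma transpose_ips_cov: "transpose (ips_cov p K) = ips_cov p K"
  unfolding transpose_def by (simp add: vec_eq_iff ips_cov_nth covar_commute)

locale reward_kernel =
  fixes K :: "'d::finite \<Rightarrow> real measure"
  assumes prob_space_kernel: "prob_space (K a)"
    and sets_kernel: "sets (K a) = sets borel"
begin

lemma measurable_Pair_kernel: "(\<lambda>r. (a, r)) \<in> K a \<rightarrow>\<^sub>M count_space UNIV \<Otimes>\<^sub>M borel"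
proof -
  have "(\<lambda>r::real. (a, r)) \<in> borel \<rightarrow>\<^sub>M count_space UNIV \<Otimes>\<^sub>M borel"
    by measurable
  then show ?thesis
    unfolding measurable_cong_sets[OF sets_kernel refl] .
qed

lemma measurable_cond_law_kernel:
  "(\<lambda>a. distr (K a) (count_space UNIV \<Otimes>\<^sub>M borel) (\<lambda>r. (a, r)))
     \<in> measure_pmf p \<rightarrow>\<^sub>M subprob_algebra (count_space UNIV \<Otimes>\<^sub>M borel)"
proof -
  have "prob_space (distr (K a) (count_space UNIV \<Otimes>\<^sub>M borel) (\<lambda>r. (a, r)))" for a
    using prob_space_kernel measurable_Pair_kernel by (rule prob_space.prob_space_distr)
  then show ?thesis
    unfolding measurable_pmf_measure1 by (auto simp: space_subprob_algebra prob_space_imp_subprob_space)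
qed

lemma sets_cond_law: "sets (cond_law p K) = sets (count_space UNIV \<Otimes>\<^sub>M borel)"
  unfolding cond_law_def by (rule sets_bind) (auto simp: set_pmf_not_empty)

lemma prob_space_cond_law: "prob_space (cond_law p K)"
  unfolding cond_law_def
proof (rule measure_pmf.prob_space_bind[OF _ measurable_cond_law_kernel])
  show "AE a in measure_pmf p. prob_space (distr (K a) (count_space UNIV \<Otimes>\<^sub>M borel) (\<lambda>r. (a, r)))"
    using prob_space_kernel measurable_Pair_kernel by (simp add: prob_space.prob_space_distr)
qed

lemma nn_integral_cond_law:
  assumes h: "h \<in> borel_measurable (count_space UNIV \<Otimes>\<^sub>M borel)"
  shows "(\<integral>\<^sup>+x. h x \<partial>cond_law p K) = (\<Sum>a\<in>UNIV. ennreal (pmf p a) * (\<integral>\<^sup>+r. h (a, r) \<partial>K a))"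
proof -
  have "(\<integral>\<^sup>+x. h x \<partial>cond_law p K)
      = (\<integral>\<^sup>+a. (\<integral>\<^sup>+x. h x \<partial>distr (K a) (count_space UNIV \<Otimes>\<^sub>M borel) (\<lambda>r. (a, r))) \<partial>measure_pmf p)"
    unfolding cond_law_def using h measurable_cond_law_kernel by (rule nn_integral_bind)
  also have "\<dots> = (\<integral>\<^sup>+a. (\<integral>\<^sup>+r. h (a, r) \<partial>K a) \<partial>measure_pmf p)"
    using h measurable_Pair_kernel by (simp add: nn_integral_distr)
  also have "\<dots> = (\<Sum>a\<in>UNIV. ennreal (pmf p a) * (\<integral>\<^sup>+r. h (a, r) \<partial>K a))"
    by (simp add: nn_integral_measure_pmf nn_integral_count_space_finite)
  finally show ?thesis .
qed

lemma integrable_cond_law: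
  fixes h :: "'d \<times> real \<Rightarrow> real"
  assumes h: "h \<in> borel_measurable (count_space UNIV \<Otimes>\<^sub>M borel)"
    and sections: "\<And>a. integrable (K a) (\<lambda>r. h (a, r))"
  shows "integrable (cond_law p K) h"
  unfolding integrable_iff_bounded
proof
  show "h \<in> borel_measurable (cond_law p K)"
    using h by (simp add: measurable_cong_sets[OF sets_cond_law refl])
  have "(\<integral>\<^sup>+r. ennreal (norm (h (a, r))) \<partial>K a) < \<infinity>" for a
    using sections[of a] unfolding integrable_iff_bounded by simp
  moreover have "(\<integral>\<^sup>+x. ennreal (norm (h x)) \<partial>cond_law p K)
      = (\<Sum>a\<in>UNIV. ennreal (pmf p a) * (\<integral>\<^sup>+r. ennreal (norm (h (a, r))) \<partial>K a))"
    using h by (intro nn_integral_cond_law) measurable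
  ultimately show "(\<integral>\<^sup>+x. ennreal (norm (h x)) \<partial>cond_law p K) < \<infinity>"
    by (simp add: ennreal_mult_less_top less_top[symmetric] ennreal_mult_eq_top_iff)
qed

end

locale square_integrable_reward_kernel = reward_kernel +
  assumes square_integrable_kernel: "integrable (K a) (\<lambda>r. r\<^sup>2)"
begin

lemma integrable_cond_law_reward_moments:
  shows "integrable (cond_law p K) (\<lambda>(a, r). r * g a)"
    and "integrable (cond_law p K) (\<lambda>(a, r). r\<^sup>2 * g a)"
proof -
  have "integrable (K a) (\<lambda>r. r)" for a
  proof -
    have "(\<lambda>r::real. r) \<in> borel_measurable (K a)"
      unfolding measurable_cong_sets[OF sets_kernel refl] by simp
    with prob_space.finite_measure[OF prob_space_kernel] show ?thesis
      by (rule finite_measure.square_integrable_imp_integrable) (rule square_integrable_kernel)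
  qed
  then have "integrable (K a) (\<lambda>r. r * g a)" and "integrable (K a) (\<lambda>r. r\<^sup>2 * g a)" for a
    using square_integrable_kernel by simp_all
  moreover have "(\<lambda>(a, r). r * g a) \<in> borel_measurable (count_space UNIV \<Otimes>\<^sub>M borel)"
    and "(\<lambda>(a, r). r\<^sup>2 * g a) \<in> borel_measurable (count_space UNIV \<Otimes>\<^sub>M borel)"
    by measurable
  ultimately show "integrable (cond_law p K) (\<lambda>(a, r). r * g a)"
    and "integrable (cond_law p K) (\<lambda>(a, r). r\<^sup>2 * g a)"
    by (auto intro: integrable_cond_law)
qed

lemma var_cond_law_ips_weight:
  "var (cond_law p K) (\<lambda>(a, r). r * c $ a / pmf p a) = c \<bullet> (ips_cov p K *v c)"
proof -
  have X: "ips_weight p j = (\<lambda>(a, r). r * (if a = j then 1 / pmf p j else 0))" for j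
    unfolding ips_weight_def by (auto simp: fun_eq_iff)
  have XX: "(\<lambda>x. ips_weight p j x * ips_weight p k x)
      = (\<lambda>(a, r). r\<^sup>2 * (if a = j \<and> a = k then 1 / (pmf p j * pmf p k) else 0))" for j k
    unfolding ips_weight_def by (auto simp: fun_eq_iff power2_eq_square)
  have "(\<Sum>j\<in>UNIV. c $ j * ips_weight p j (a, r)) = r * c $ a / pmf p a" for a r
  proof -
    have "(\<Sum>j\<in>UNIV. c $ j * ips_weight p j (a, r))
        = (\<Sum>j\<in>UNIV. if j = a then r * c $ a / pmf p a else 0)"
      by (rule sum.cong) (auto simp: ips_weight_def)
    then show ?thesis
      by simp
  qed
  then have sum_weights:
    "(\<lambda>x. \<Sum>j\<in>UNIV. c $ j * ips_weight p j x) = (\<lambda>(a, r). r * c $ a / pmf p a)"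
    by (simp add: fun_eq_iff split_paired_All)
  have "var (cond_law p K) (\<lambda>(a, r). r * c $ a / pmf p a)
      = (\<Sum>j\<in>UNIV. \<Sum>k\<in>UNIV. c $ j * c $ k * covar (cond_law p K) (ips_weight p j) (ips_weight p k))"
    unfolding sum_weights[symmetric]
    by (rule var_sum_eq_sum_covar[OF prob_space_cond_law finite])
      (unfold XX, unfold X, simp_all only: integrable_cond_law_reward_moments)
  also have "\<dots> = c \<bullet> (ips_cov p K *v c)"
    by (simp add: inner_vec_def matrix_vector_mult_def ips_cov_nth sum_distrib_left
        mult.commute mult.left_commute mult.assoc)
  finally show ?thesis .
qed

lemma ips_cov_pos_semidef: "pos_semidef_matrix (ips_cov p K)"
  unfolding pos_semidef_matrix_def
proof (intro conjI allI)
  show "transpose (ips_cov p K) = ips_cov p K"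
    by (rule transpose_ips_cov)
  show "0 \<le> c \<bullet> (ips_cov p K *v c)" for c
    using var_nonneg[of "cond_law p K"] by (simp add: var_cond_law_ips_weight[symmetric])
qed

end

lemma one_hot_nth: "one_hot a $ k = (if k = a then 1 else 0)"
  unfolding one_hot_def by simp

lemma inner_one_hot: "one_hot a \<bullet> x = x $ a"
proof -
  have "one_hot a \<bullet> x = (\<Sum>i\<in>UNIV. if i = a then x $ a else 0)"
    unfolding one_hot_def inner_vec_def by (rule sum.cong) auto
  then show ?thesis
    by simp
qed

lemma var_ips_estimator:
  fixes p :: "'i \<Rightarrow> 'd::finite pmf" and K :: "'i \<Rightarrow> 'd \<Rightarrow> real measure"
    and c :: "'i \<Rightarrow> real^'d"
  assumes I: "finite I" and K: "\<And>i. i \<in> I \<Longrightarrow> square_integrable_reward_kernel (K i)"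
  shows "var (PiM I (\<lambda>i. cond_law (p i) (K i)))
      (\<lambda>\<omega>. t * (\<Sum>i\<in>I. snd (\<omega> i) * c i $ fst (\<omega> i) / pmf (p i) (fst (\<omega> i))))
    = t\<^sup>2 * (\<Sum>i\<in>I. c i \<bullet> (ips_cov (p i) (K i) *v c i))"
proof -
  define G where "G i = (\<lambda>(a, r). r * c i $ a / pmf (p i) a)" for i
  have G: "prob_space (cond_law (p i) (K i))" "integrable (cond_law (p i) (K i)) (G i)"
    "integrable (cond_law (p i) (K i)) (\<lambda>x. (G i x)\<^sup>2)"
    "var (cond_law (p i) (K i)) (G i) = c i \<bullet> (ips_cov (p i) (K i) *v c i)"
    if "i \<in> I" for i
  proof -
    interpret square_integrable_reward_kernel "K i"
      using K that .
    have G_eq: "G i = (\<lambda>(a, r). r * (c i $ a / pmf (p i) a))"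
      and G2_eq: "(\<lambda>x. (G i x)\<^sup>2) = (\<lambda>(a, r). r\<^sup>2 * (c i $ a / pmf (p i) a)\<^sup>2)"
      unfolding G_def by (auto simp: fun_eq_iff power_mult_distrib power_divide)
    show "prob_space (cond_law (p i) (K i))"
      by (rule prob_space_cond_law)
    show "integrable (cond_law (p i) (K i)) (G i)"
      unfolding G_eq by (rule integrable_cond_law_reward_moments)
    show "integrable (cond_law (p i) (K i)) (\<lambda>x. (G i x)\<^sup>2)"
      unfolding G2_eq by (rule integrable_cond_law_reward_moments)
    show "var (cond_law (p i) (K i)) (G i) = c i \<bullet> (ips_cov (p i) (K i) *v c i)"
      unfolding G_def by (rule var_cond_law_ips_weight)
  qed
  have "var (PiM I (\<lambda>i. cond_law (p i) (K i))) (\<lambda>\<omega>. \<Sum>i\<in>I. G i (\<omega> i))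
      = (\<Sum>i\<in>I. var (cond_law (p i) (K i)) (G i))"
    using I G(1-3) by (rule var_PiM_sum)
  then show ?thesis
    unfolding var_cmult G_def using G(4) by (simp add: case_prod_beta G_def)
qed

theorem proposition3:
  fixes \<X> :: "(real^'p) set"
    and act :: "'d::finite \<Rightarrow> real"
    and f :: "real \<Rightarrow> real^'c::finite"
    and D :: "real^'c^'d"
    and n :: nat
    and pit :: "nat \<Rightarrow> real^'p \<Rightarrow> 'd pmf"
    and Rk :: "real^'p \<Rightarrow> 'd \<Rightarrow> real measure"
    and W :: "nat \<Rightarrow> real^'p \<Rightarrow> real^'d^'d"
    and xs :: "nat \<Rightarrow> real^'p"
    and \<pi> :: "real^'p \<Rightarrow> 'd"
  assumes act_inj: "inj act"
    and f_const: "\<exists>c0. \<forall>a. f a $ c0 = 1"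
    and D_def: "\<forall>k. D $ k = f (act k)"
    and D_rank: "rank D = CARD('c)"
    and n_pos: "n \<ge> 1"
    and pit_pos: "\<forall>i<n. \<forall>x\<in>\<X>. \<forall>a. pmf (pit i x) a > 0"
    and Rk_prob: "\<forall>x\<in>\<X>. \<forall>a. prob_space (Rk x a) \<and> sets (Rk x a) = sets borel
                      \<and> integrable (Rk x a) (\<lambda>r. r\<^sup>2)"
    and W_sym: "\<forall>i<n. \<forall>x\<in>\<X>. transpose (W i x) = W i x"
    and W_pd: "\<forall>i<n. \<forall>x\<in>\<X>. \<forall>v. v \<noteq> 0 \<longrightarrow> v \<bullet> (W i x *v v) > 0"
    and xs_in: "\<forall>i<n. xs i \<in> \<X>"
  shows
    "let P = PiM {..<n} (\<lambda>i. cond_law (pit i (xs i)) (Rk (xs i)));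
         V_IPS = (\<lambda>\<omega>. (1 / real n) * (\<Sum>i<n. snd (\<omega> i) *
                    (if fst (\<omega> i) = \<pi> (xs i) then 1 else 0) / pmf (pit i (xs i)) (fst (\<omega> i))));
         V_K = (\<lambda>\<omega>. (1 / real n) * (\<Sum>i<n. snd (\<omega> i) *
                    (one_hot (fst (\<omega> i)) \<bullet> (K_mat (W i (xs i)) D *v one_hot (\<pi> (xs i))))
                    / pmf (pit i (xs i)) (fst (\<omega> i))));
         kmax = Max ((\<lambda>i. cond_number (W i (xs i) ** ips_cov (pit i (xs i)) (Rk (xs i)))) ` {..<n})
     in kmax = \<infinity> \<or> var P V_K \<le> real_of_ereal kmax * var P V_IPS"
proof -
  define \<Sigma> where "\<Sigma> i = ips_cov (pit i (xs i)) (Rk (xs i))" for i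
  define e where "e i = one_hot (\<pi> (xs i))" for i
  have kernel: "square_integrable_reward_kernel (Rk (xs i))" if "i \<in> {..<n}" for i
    using Rk_prob xs_in that
    unfolding square_integrable_reward_kernel_def square_integrable_reward_kernel_axioms_def
      reward_kernel_def by auto
  have "pos_def_matrix (W i (xs i))" if "i \<in> {..<n}" for i
    unfolding pos_def_matrix_def using W_sym W_pd xs_in that by blast
  moreover have "pos_semidef_matrix (\<Sigma> i)" if "i \<in> {..<n}" for i
    unfolding \<Sigma>_def using kernel[OF that] by (rule square_integrable_reward_kernel.ips_cov_pos_semidef)
  ultimately have bound: "Max ((\<lambda>i. cond_number (W i (xs i) ** \<Sigma> i)) ` {..<n}) = \<infinity> \<or>
      (\<Sum>i<n. (K_mat (W i (xs i)) D *v e i) \<bullet> (\<Sigma> i *v (K_mat (W i (xs i)) D *v e i)))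
      \<le> real_of_ereal (Max ((\<lambda>i. cond_number (W i (xs i) ** \<Sigma> i)) ` {..<n}))
        * (\<Sum>i<n. e i \<bullet> (\<Sigma> i *v e i))"
    using n_pos D_rank by (intro sum_K_mat_forms_le_Max_cond_number) (auto simp: lessThan_empty_iff)
  note var_estimator = var_ips_estimator[where p="\<lambda>i. pit i (xs i)" and K="\<lambda>i. Rk (xs i)"
      and t="1 / real n", OF finite_lessThan kernel, folded \<Sigma>_def]
  show ?thesis
    using bound var_estimator[where c=e] var_estimator[where c="\<lambda>i. K_mat (W i (xs i)) D *v e i"]
    unfolding Let_def e_def \<Sigma>_def
    by (auto simp: one_hot_nth inner_one_hot mult.left_commute intro: mult_left_mono)
qed

end
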